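(* Let $G=(V,D)$ be a directed graph and $J=J(\psi_G)$. Let $R_{\lambda_{kl}}$ be the row of $J$ for the edge $(k,l)\in D$ and $R_s$ the row for $s$. Perform the row operations $R_s\to R_s-\frac{\lambda_{kl}}{2s}R_{\lambda_{kl}}$ for every $(k,l)\in D$, followed by $R_s\to 2R_s$. Afterwards the entries of $R_s$ are as follows: the entry in column $K_{ii}$ is $2$; the entry in column $K_{ij}$ with $i\neq j$ and $(i,j)\in D$ is $-\lambda_{ij}$; the entry in column $K_{ij}$ with $i\neq j$ and $i,j$ not adjacent is $0$.
   Context: A directed graph $G=(V,D)$ has edge set $D\subseteq V\times V$ of ordered pairs $(i,j)$, $i\neq j$. $\Lambda$ is the $V\times V$ matrix with indeterminate entries $\lambda_{ij}$ for $(i,j)\in D$ and zeros elsewhere, and $s$ is a further indeterminate. Let $\psi_G(\Lambda,s)=s(I-\Lambda)(I-\Lambda)^T=K$. The transposed Jacobian $J=J(\psi_G)$ has rows indexed by $\{\lambda_{kl}:(k,l)\in D\}\cup\{s\}$ and columns indexed by entries $K_{ij}$ of the symmetric matrix $K$ (so $K_{ij}$ and $K_{ji}$ index the same column). Its entries are $\partial K_{ij}/\partial\theta$. *)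

theory Defs
  imports "HOL-Analysis.Analysis"
begin

definition digraph :: "'v set \<Rightarrow> ('v \<times> 'v) set \<Rightarrow> bool" where
  "digraph V D \<longleftrightarrow> finite V \<and> D \<subseteq> V \<times> V \<and> (\<forall>(i,j)\<in>D. i \<noteq> j)"

text \<open>The indeterminates lambda_kl, (k,l) in D, are modelled by an assignment
lam of real values; Lambda has entry lam (i,j) for (i,j) in D and 0 elsewhere.\<close>
definition Lam :: "('v \<times> 'v) set \<Rightarrow> ('v \<times> 'v \<Rightarrow> real) \<Rightarrow> 'v \<Rightarrow> 'v \<Rightarrow> real" where
  "Lam D lam i j = (if (i,j) \<in> D then lam (i,j) else 0)"

definition IdM :: "'v \<Rightarrow> 'v \<Rightarrow> real" where
  "IdM i j = (if i = j then 1 else 0)"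

definition psiK :: "'v set \<Rightarrow> ('v \<times> 'v) set \<Rightarrow> ('v \<times> 'v \<Rightarrow> real) \<Rightarrow> real \<Rightarrow> 'v \<Rightarrow> 'v \<Rightarrow> real" where
  "psiK V D lam s i j =
     s * (\<Sum>m\<in>V. (IdM i m - Lam D lam i m) * (IdM j m - Lam D lam j m))"

definition J_lam :: "'v set \<Rightarrow> ('v \<times> 'v) set \<Rightarrow> ('v \<times> 'v \<Rightarrow> real) \<Rightarrow> real
    \<Rightarrow> 'v \<times> 'v \<Rightarrow> 'v \<Rightarrow> 'v \<Rightarrow> real" where
  "J_lam V D lam s kl i j = deriv (\<lambda>t. psiK V D (lam(kl := t)) s i j) (lam kl)"

definition J_s :: "'v set \<Rightarrow> ('v \<times> 'v) set \<Rightarrow> ('v \<times> 'v \<Rightarrow> real) \<Rightarrow> real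
    \<Rightarrow> 'v \<Rightarrow> 'v \<Rightarrow> real" where
  "J_s V D lam s i j = deriv (\<lambda>t. psiK V D lam t i j) s"

text \<open>The row R_s after the operations R_s := R_s - lambda_kl/(2s) R_lambda_kl for
all (k,l) in D (the rows R_lambda_kl are untouched, so doing them one after the
other amounts to subtracting the sum), followed by R_s := 2 R_s.\<close>
definition Rs_new :: "'v set \<Rightarrow> ('v \<times> 'v) set \<Rightarrow> ('v \<times> 'v \<Rightarrow> real) \<Rightarrow> real
    \<Rightarrow> 'v \<Rightarrow> 'v \<Rightarrow> real" where
  "Rs_new V D lam s i j =
     2 * (J_s V D lam s i j - (\<Sum>kl\<in>D. lam kl / (2 * s) * J_lam V D lam s kl i j))"

end

theory Submission
  imports Defs
begin

text \<open>Write A = I - Lambda, so that K = s A A^T. Then dK/ds = A A^T, and, K being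
  quadratic in the lambdas, the sum of lambda_kl dK/dlambda_kl over D is -s (Lambda A^T + A Lambda^T).
  Hence the new row R_s is 2 A A^T + Lambda A^T + A Lambda^T = A + A^T = 2 I - Lambda - Lambda^T,
  using A + Lambda = I, and the three claims are read off this matrix.\<close>

definition IminusLam :: "('v \<times> 'v) set \<Rightarrow> ('v \<times> 'v \<Rightarrow> real) \<Rightarrow> 'v \<Rightarrow> 'v \<Rightarrow> real" where
  "IminusLam D lam i m = IdM i m - Lam D lam i m"

lemma Lam_fun_upd:
  "kl \<in> D \<Longrightarrow> Lam D (lam(kl := t)) i m = Lam D lam i m + of_bool ((i,m) = kl) * (t - lam kl)"
  by (auto simp: Lam_def)

lemma sum_IdM_mult:
  fixes f :: "'v \<Rightarrow> real"
  assumes "finite V" "i \<in> V"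
  shows "(\<Sum>m\<in>V. IdM i m * f m) = f i"
proof -
  have "(\<Sum>m\<in>V. IdM i m * f m) = (\<Sum>m\<in>V. if i = m then f i else 0)"
    by (rule sum.cong) (auto simp: IdM_def)
  then show ?thesis
    using assms by simp
qed

lemma sum_lam_of_bool_eq_Lam:
  "finite D \<Longrightarrow> (\<Sum>kl\<in>D. lam kl * of_bool ((i,m) = kl)) = Lam D lam i m"
  by (simp add: Lam_def sum.delta)

lemma J_s_eq: "J_s V D lam s i j = (\<Sum>m\<in>V. IminusLam D lam i m * IminusLam D lam j m)"
proof -
  have "((\<lambda>t. psiK V D lam t i j) has_real_derivative
          (\<Sum>m\<in>V. IminusLam D lam i m * IminusLam D lam j m)) (at s)"
    unfolding psiK_def IminusLam_def by (auto intro!: derivative_eq_intros)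
  then show ?thesis
    unfolding J_s_def by (rule DERIV_imp_deriv)
qed

lemma J_lam_eq:
  assumes "kl \<in> D"
  shows "J_lam V D lam s kl i j =
    - s * (\<Sum>m\<in>V. of_bool ((i,m) = kl) * IminusLam D lam j m
                   + IminusLam D lam i m * of_bool ((j,m) = kl))"
proof -
  let ?A = "IminusLam D lam" and ?e = "\<lambda>i m. of_bool ((i,m) = kl) :: real"
  have psiK_along: "(\<lambda>t. psiK V D (lam(kl := t)) s i j) =
      (\<lambda>t. s * (\<Sum>m\<in>V. (?A i m - ?e i m * (t - lam kl)) * (?A j m - ?e j m * (t - lam kl))))"
    by (rule ext) (simp add: psiK_def Lam_fun_upd[OF assms] IminusLam_def algebra_simps)
  have "((\<lambda>t. s * (\<Sum>m\<in>V. (?A i m - ?e i m * (t - lam kl)) * (?A j m - ?e j m * (t - lam kl))))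
      has_real_derivative - s * (\<Sum>m\<in>V. ?e i m * ?A j m + ?A i m * ?e j m)) (at (lam kl))"
    by (auto intro!: derivative_eq_intros) (simp add: sum_subtractf sum_negf sum.distrib algebra_simps)
  then show ?thesis
    unfolding J_lam_def psiK_along by (rule DERIV_imp_deriv)
qed

lemma sum_lam_J_lam_eq:
  assumes "finite D"
  shows "(\<Sum>kl\<in>D. lam kl * J_lam V D lam s kl i j) =
    - s * (\<Sum>m\<in>V. Lam D lam i m * IminusLam D lam j m + IminusLam D lam i m * Lam D lam j m)"
proof -
  let ?A = "IminusLam D lam" and ?e = "\<lambda>kl i m. of_bool ((i,m) = kl) :: real"
  have "(\<Sum>kl\<in>D. lam kl * J_lam V D lam s kl i j) =
      - s * (\<Sum>kl\<in>D. \<Sum>m\<in>V. lam kl * ?e kl i m * ?A j m + ?A i m * (lam kl * ?e kl j m))"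
    by (simp add: J_lam_eq sum_distrib_left algebra_simps)
  also have "\<dots> = - s * (\<Sum>m\<in>V. (\<Sum>kl\<in>D. lam kl * ?e kl i m) * ?A j m
                                + ?A i m * (\<Sum>kl\<in>D. lam kl * ?e kl j m))"
    by (simp add: sum.swap[of _ D V] sum.distrib sum_distrib_left sum_distrib_right)
  finally show ?thesis
    using assms by (simp only: sum_lam_of_bool_eq_Lam)
qed

lemma Rs_new_eq:
  assumes "digraph V D" "s \<noteq> 0" "i \<in> V" "j \<in> V"
  shows "Rs_new V D lam s i j = 2 * IdM i j - Lam D lam i j - Lam D lam j i"
proof -
  let ?A = "IminusLam D lam"
  have "finite V" "finite D"
    using assms(1) finite_subset[of D "V \<times> V"] by (auto simp: digraph_def)
  have "(\<Sum>kl\<in>D. lam kl / (2 * s) * J_lam V D lam s kl i j) =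
      (\<Sum>kl\<in>D. lam kl * J_lam V D lam s kl i j) / (2 * s)"
    by (simp add: sum_divide_distrib)
  then have "Rs_new V D lam s i j =
      2 * (\<Sum>m\<in>V. ?A i m * ?A j m) + (\<Sum>m\<in>V. Lam D lam i m * ?A j m + ?A i m * Lam D lam j m)"
    using assms(2) \<open>finite D\<close> by (simp add: Rs_new_def J_s_eq sum_lam_J_lam_eq)
  also have "\<dots> = (\<Sum>m\<in>V. 2 * (?A i m * ?A j m) + (Lam D lam i m * ?A j m + ?A i m * Lam D lam j m))"
    by (simp add: sum.distrib sum_distrib_left)
  also have "\<dots> = (\<Sum>m\<in>V. IdM i m * ?A j m + IdM j m * ?A i m)"
    by (rule sum.cong) (simp_all add: IminusLam_def algebra_simps)
  also have "\<dots> = ?A j i + ?A i j"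
    using \<open>finite V\<close> assms(3,4) by (simp add: sum.distrib sum_IdM_mult)
  finally show ?thesis
    by (simp add: IminusLam_def IdM_def)
qed

theorem lemma3p3:
  fixes V :: "'v set" and D :: "('v \<times> 'v) set"
    and lam :: "'v \<times> 'v \<Rightarrow> real" and s :: real
  assumes "digraph V D"
    and "\<forall>(i,j)\<in>D. (j,i) \<notin> D"
    and "s \<noteq> 0"
  shows "(\<forall>i\<in>V. Rs_new V D lam s i i = 2)
       \<and> (\<forall>(i,j)\<in>D. Rs_new V D lam s i j = - lam (i,j))
       \<and> (\<forall>i\<in>V. \<forall>j\<in>V. i \<noteq> j \<and> (i,j) \<notin> D \<and> (j,i) \<notin> D \<longrightarrow> Rs_new V D lam s i j = 0)"
proof -
  have D_sub: "D \<subseteq> V \<times> V" and irrefl: "\<forall>(i,j)\<in>D. i \<noteq> j"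
    using assms(1) by (auto simp: digraph_def)
  note Rs = Rs_new_eq[OF assms(1,3)]
  have "Rs_new V D lam s i j = - lam (i,j)" if "(i,j) \<in> D" for i j
    using that D_sub irrefl assms(2) Rs[of i j] by (fastforce simp: Lam_def IdM_def)
  then show ?thesis
    using irrefl Rs by (auto simp: Lam_def IdM_def)
qed

end
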